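(* Let $q$ be a prime power and let $M$ be a $2\times 2$ matrix over $\mathbb{F}_{q^2}$ with two distinct eigenvalues $c_1,c_2$ and eigenvectors $u_1,u_2\in\mathbb{F}_{q^2}^2$ ($u_i$ an eigenvector for $c_i$) such that $\langle u_i,u_i\rangle=0$ for $i=1,2$. Then there is $o\in\mathbb{F}_{q^2}^*$ such that $\mathrm{Num}'_0(M)=\{to\}_{t\in\mathbb{F}_q}$.
   Context: The Hermitian form on $\mathbb{F}_{q^2}^n$ is $\langle u,v\rangle=\sum_i u_i^q v_i$. For an $n\times n$ matrix $M$ over $\mathbb{F}_{q^2}$ with $n\ge 2$, $\mathrm{Num}'_0(M)=\{\langle u,Mu\rangle: u\in\mathbb{F}_{q^2}^n\setminus\{0\},\ \langle u,u\rangle=0\}$. *)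

theory Defs
  imports "HOL-Analysis.Analysis"
begin

definition herm :: "nat \<Rightarrow> 'a::field ^ 'n \<Rightarrow> 'a ^ 'n \<Rightarrow> 'a" where
  "herm q u v = (\<Sum>i\<in>UNIV. (u $ i) ^ q * v $ i)"

definition Num0' :: "nat \<Rightarrow> 'a::field ^ 'n ^ 'n \<Rightarrow> 'a set" where
  "Num0' q M = {herm q u (M *v u) | u. u \<noteq> 0 \<and> herm q u u = 0}"

definition subfield_Fq :: "nat \<Rightarrow> 'a::field set" where
  "subfield_Fq q = {t. t ^ q = t}"

end

theory Submission
  imports Defs "HOL-Number_Theory.Number_Theory" "HOL-Computational_Algebra.Polynomial"
begin

text \<open>
  Let \<open>\<sigma>(x) = x^q\<close> be the conjugation of \<open>F = GF(q^2)\<close> over \<open>GF(q)\<close>. The eigenvectors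
  \<open>u\<^sub>1, u\<^sub>2\<close> are a basis of \<open>F\<^sup>2\<close>; writing \<open>u = a u\<^sub>1 + b u\<^sub>2\<close> and
  \<open>s = \<sigma>(a) b \<langle>u\<^sub>1,u\<^sub>2\<rangle>\<close>, isotropy of \<open>u\<^sub>1, u\<^sub>2\<close> gives
  \<open>\<langle>u,u\<rangle> = s + \<sigma>(s)\<close> and \<open>\<langle>u,Mu\<rangle> = c\<^sub>2 s + c\<^sub>1 \<sigma>(s)\<close>. Since the form is
  nondegenerate, \<open>\<langle>u\<^sub>1,u\<^sub>2\<rangle> \<noteq> 0\<close>, so every \<open>s\<close> arises from a nonzero \<open>u\<close> (take \<open>a = 1\<close>). Hence
  \<open>Num'\<^sub>0(M)\<close> is \<open>c\<^sub>2 - c\<^sub>1\<close> times the kernel of the trace \<open>s \<mapsto> s + \<sigma>(s)\<close>.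
  That kernel is a line \<open>GF(q) w\<close>: the trace maps \<open>F\<close> into the \<open>q\<close> fixed points of \<open>\<sigma>\<close>,
  so it is not injective, and any nonzero \<open>w\<close> in it spans it.
\<close>

lemma power_card_eq_self:
  fixes x :: "'a::{finite,field}"
  shows "x ^ CARD('a) = x"
proof (cases "x = 0")
  case False
  let ?U = "UNIV - {0::'a}"
  have "(\<Prod>y\<in>?U. x * y) = (\<Prod>y\<in>?U. y)"
    by (rule prod.reindex_bij_witness[of _ "\<lambda>y. y / x" "\<lambda>y. x * y"]) (use False in auto)
  moreover have "(\<Prod>y\<in>?U. x * y) = x ^ card ?U * (\<Prod>y\<in>?U. y)"
    by (simp add: prod.distrib)
  moreover have "(\<Prod>y\<in>?U. y) \<noteq> 0"
    by simp
  ultimately have "x ^ card ?U = 1"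
    by simp
  moreover have "CARD('a) = Suc (card ?U)"
    by (simp add: card_Suc_Diff1)
  ultimately show ?thesis
    by (simp only: power_Suc mult_1_right)
qed (simp add: finite_UNIV_card_ge_0)

lemma power_prime_power_add:
  fixes x y :: "'a::{finite,field}"
  assumes "prime p" and "CARD('a) = p ^ n"
  shows "(x + y) ^ (p ^ k) = x ^ (p ^ k) + y ^ (p ^ k)"
proof -
  have "prime CHAR('a)"
    by (rule prime_CHAR_semidom, rule finite_imp_CHAR_pos) simp
  moreover have "CHAR('a) dvd p ^ n"
    using CHAR_dvd_CARD[where 'a = 'a] assms(2) by simp
  ultimately have "CHAR('a) = p"
    using assms(1) prime_dvd_power primes_dvd_imp_eq by blast
  with \<open>prime CHAR('a)\<close> show ?thesis
    by (intro freshmans_dream') simp_all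
qed

lemma power_power_eq_self_if_CARD_eq_square:
  fixes x :: "'a::{finite,field}"
  assumes "CARD('a) = q ^ 2"
  shows "(x ^ q) ^ q = x"
proof -
  have "(x ^ q) ^ q = x ^ CARD('a)"
    by (simp only: assms power2_eq_square power_mult)
  then show ?thesis
    by (simp only: power_card_eq_self)
qed

lemma card_power_eq_self_le:
  assumes "q \<ge> 2"
  shows "card {x::'a::idom. x ^ q = x} \<le> q"
proof -
  define P :: "'a poly" where "P = Polynomial.monom 1 q - Polynomial.monom 1 1"
  have "Polynomial.coeff P q = 1"
    using assms by (simp add: P_def coeff_monom)
  then have "P \<noteq> 0"
    by auto
  moreover have "degree P \<le> q"
    using assms unfolding P_def by (intro degree_diff_le) (auto intro: order.trans[OF degree_monom_le])
  moreover have "{x. x ^ q = x} = {x. poly P x = 0}"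
    by (simp add: P_def poly_monom)
  ultimately show ?thesis
    using card_poly_roots_bound[of P] by simp
qed

lemma additive_power_minus:
  fixes x y :: "'a::ring_1"
  assumes add: "\<And>x y::'a. (x + y) ^ q = x ^ q + y ^ q"
  shows "(x - y) ^ q = x ^ q - y ^ q"
  using add[of "x - y" y] by (simp add: algebra_simps)

lemma exists_power_eq_uminus:
  fixes q :: nat
  assumes add: "\<And>x y::'a. (x + y) ^ q = x ^ q + y ^ q"
    and inv: "\<And>x::'a. (x ^ q) ^ q = x"
    and card: "CARD('a::{finite,field}) = q ^ 2" and "q \<ge> 2"
  shows "\<exists>w::'a. w \<noteq> 0 \<and> w ^ q = - w"
proof -
  define trace where "trace x = x + x ^ q" for x :: 'a
  have "range trace \<subseteq> {x. x ^ q = x}"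
    by (auto simp: trace_def add inv add.commute)
  then have "card (range trace) \<le> q"
    using card_mono[OF finite] card_power_eq_self_le[OF \<open>q \<ge> 2\<close>] le_trans by blast
  moreover have "q < CARD('a)"
    using card \<open>q \<ge> 2\<close> by (simp add: power2_eq_square)
  ultimately have "\<not> inj trace"
    using card_image by fastforce
  then obtain x y where "x \<noteq> y" "trace x = trace y"
    unfolding inj_def by blast
  then show ?thesis
    by (intro exI[of _ "x - y"])
       (simp add: trace_def additive_power_minus[OF add] algebra_simps)
qed

lemma power_eq_uminus_eq_multiples:
  fixes w :: "'a::field"
  assumes "w \<noteq> 0" and "w ^ q = - w"
  shows "{s. s ^ q = - s} = {t * w | t. t ^ q = t}"
proof (intro equalityI subsetI)
  fix s :: 'a assume "s \<in> {s. s ^ q = - s}"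
  then have "(s / w) ^ q = s / w"
    using assms by (simp add: power_divide)
  then show "s \<in> {t * w | t. t ^ q = t}"
    using assms(1) by (intro CollectI exI[of _ "s / w"]) simp
qed (use assms in \<open>auto simp: power_mult_distrib\<close>)

lemma additive_power_sum:
  fixes f :: "'b \<Rightarrow> 'a::comm_semiring_1"
  assumes add: "\<And>x y::'a. (x + y) ^ q = x ^ q + y ^ q" and "q > 0"
  shows "(sum f A) ^ q = (\<Sum>i\<in>A. f i ^ q)"
proof (induction A rule: infinite_finite_induct)
  case (insert x F)
  then show ?case
    by (simp add: add)
qed (simp_all add: zero_power \<open>q > 0\<close>)

lemma herm_add_left:
  fixes u v w :: "'a::field ^ 'n"
  assumes add: "\<And>x y::'a. (x + y) ^ q = x ^ q + y ^ q"
  shows "herm q (a *s u + b *s v) w = a ^ q * herm q u w + b ^ q * herm q v w"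
  unfolding herm_def
  by (simp add: add power_mult_distrib sum.distrib sum_distrib_left algebra_simps)

lemma herm_add_right:
  fixes u v w :: "'a::field ^ 'n"
  shows "herm q u (a *s v + b *s w) = a * herm q u v + b * herm q u w"
  unfolding herm_def by (simp add: sum.distrib sum_distrib_left algebra_simps)

lemma herm_commute:
  fixes u v :: "'a::field ^ 'n"
  assumes add: "\<And>x y::'a. (x + y) ^ q = x ^ q + y ^ q"
    and inv: "\<And>x::'a. (x ^ q) ^ q = x" and "q > 0"
  shows "herm q v u = (herm q u v) ^ q"
proof -
  have "(herm q u v) ^ q = (\<Sum>i\<in>UNIV. ((u $ i) ^ q * v $ i) ^ q)"
    unfolding herm_def by (rule additive_power_sum[OF add \<open>q > 0\<close>])
  also have "\<dots> = herm q v u"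
    unfolding herm_def by (simp add: power_mult_distrib inv mult.commute)
  finally show ?thesis ..
qed

lemma herm_axis_self:
  assumes "q > 0"
  shows "herm q (axis i 1) (axis i (1::'a::field)) = 1"
proof -
  have "(axis i 1 $ j) ^ q * axis i (1::'a) $ j = (if j = i then 1 else 0)" for j
    using assms by (cases "j = i") (simp_all add: axis_def power_0_left)
  then show ?thesis
    by (simp add: herm_def)
qed

lemma herm_isotropic_pair_ne_zero:
  fixes x y :: "'a::field ^ 'n"
  assumes add: "\<And>x y::'a. (x + y) ^ q = x ^ q + y ^ q"
    and inv: "\<And>x::'a. (x ^ q) ^ q = x" and "q > 0"
    and span: "\<And>u. \<exists>a b. u = a *s x + b *s y"
    and "herm q x x = 0" and "herm q y y = 0"
  shows "herm q x y \<noteq> 0"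
proof
  assume xy: "herm q x y = 0"
  then have yx: "herm q y x = 0"
    using herm_commute[OF add inv \<open>q > 0\<close>, of y x] \<open>q > 0\<close> by simp
  fix i :: 'n
  obtain a b where e: "axis i 1 = a *s x + b *s y"
    using span by blast
  have "herm q (axis i 1) (axis i (1::'a)) = 0"
    unfolding e by (simp add: herm_add_left[OF add] herm_add_right assms(5,6) xy yx)
  moreover have "herm q (axis i 1) (axis i (1::'a)) = 1"
    using \<open>q > 0\<close> by (rule herm_axis_self)
  ultimately show False
    by simp
qed

lemma eigenvectors_independent:
  fixes M :: "'a::field ^ 'n ^ 'n"
  assumes "c1 \<noteq> c2" and "x \<noteq> 0" and "y \<noteq> 0"
    and "M *v x = c1 *s x" and "M *v y = c2 *s y"
    and "a *s x + b *s y = 0"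
  shows "a = 0 \<and> b = 0"
proof -
  have "M *v (a *s x + b *s y) - c1 *s (a *s x + b *s y) = 0"
    using assms(6) by simp
  then have "(b * (c2 - c1)) *s y = 0"
    by (simp add: matrix_vector_right_distrib vector_scalar_commute assms(4,5) algebra_simps)
  then have "b = 0"
    using assms(1,3) by simp
  then show ?thesis
    using assms(2,6) by simp
qed

lemma vec2_independent_span:
  fixes x y u :: "'a::field ^ 2"
  assumes indep: "\<And>a b. a *s x + b *s y = 0 \<Longrightarrow> a = 0 \<and> b = 0"
  shows "\<exists>a b. u = a *s x + b *s y"
proof -
  define d where "d = x$1 * y$2 - y$1 * x$2"
  have "d \<noteq> 0"
  proof
    assume "d = 0"
    then have "(y$2) *s x + (- x$2) *s y = 0" and "(y$1) *s x + (- x$1) *s y = 0"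
      by (simp_all add: vec_eq_iff forall_2 d_def algebra_simps)
    then have "x$1 = 0" and "x$2 = 0"
      using indep neg_equal_0_iff_equal by blast+
    then have "x = 0"
      by (simp add: vec_eq_iff forall_2)
    then show False
      using indep[of 1 0] by simp
  qed
  define a where "a = (u$1 * y$2 - y$1 * u$2) / d"
  define b where "b = (x$1 * u$2 - u$1 * x$2) / d"
  have "u$1 = a * x$1 + b * y$1" and "u$2 = a * x$2 + b * y$2"
    using \<open>d \<noteq> 0\<close> unfolding a_def b_def
    by (simp_all add: field_simps) (simp_all add: d_def algebra_simps)
  then show ?thesis
    by (intro exI[of _ a] exI[of _ b]) (simp add: vec_eq_iff forall_2)
qed

lemma Num0'I:
  "u \<noteq> 0 \<Longrightarrow> herm q u u = 0 \<Longrightarrow> herm q u (M *v u) \<in> Num0' q M"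
  unfolding Num0'_def by blast

lemma Num0'_eq_trace_kernel:
  fixes M :: "'a::field ^ 'n ^ 'n" and u1 u2 :: "'a ^ 'n"
  assumes add: "\<And>x y::'a. (x + y) ^ q = x ^ q + y ^ q"
    and inv: "\<And>x::'a. (x ^ q) ^ q = x" and "q > 0"
    and indep: "\<And>a b. a *s u1 + b *s u2 = 0 \<Longrightarrow> a = 0 \<and> b = 0"
    and span: "\<And>u. \<exists>a b. u = a *s u1 + b *s u2"
    and eig1: "M *v u1 = c1 *s u1" and eig2: "M *v u2 = c2 *s u2"
    and iso1: "herm q u1 u1 = 0" and iso2: "herm q u2 u2 = 0"
  shows "Num0' q M = (\<lambda>s. (c2 - c1) * s) ` {s. s ^ q = - s}"
proof -
  define h where "h = herm q u1 u2"
  have "h \<noteq> 0"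
    unfolding h_def using herm_isotropic_pair_ne_zero[OF add inv \<open>q > 0\<close> span iso1 iso2] .
  have forms: "herm q v v = s + s ^ q \<and> herm q v (M *v v) = c2 * s + c1 * s ^ q"
    if v: "v = a *s u1 + b *s u2" and s: "s = a ^ q * b * h" for v a b s
  proof -
    have "herm q u2 u1 = h ^ q"
      unfolding h_def using herm_commute[OF add inv \<open>q > 0\<close>] .
    moreover have sq: "s ^ q = a * b ^ q * h ^ q"
      by (simp add: s power_mult_distrib inv)
    moreover have Mv: "M *v v = (a * c1) *s u1 + (b * c2) *s u2"
      by (simp add: v matrix_vector_right_distrib vector_scalar_commute eig1 eig2)
    ultimately show ?thesis
      unfolding sq Mv unfolding v s
      by (simp add: herm_add_left[OF add] herm_add_right iso1 iso2 h_def[symmetric] algebra_simps)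
  qed
  show ?thesis
  proof (intro equalityI subsetI)
    fix z assume "z \<in> Num0' q M"
    then obtain u where "herm q u u = 0" and z: "z = herm q u (M *v u)"
      unfolding Num0'_def by blast
    moreover obtain a b where u: "u = a *s u1 + b *s u2"
      using span by blast
    moreover define s where "s = a ^ q * b * h"
    ultimately have "s ^ q = - s" and "z = c2 * s + c1 * s ^ q"
      using forms[OF u s_def] by (simp_all add: eq_neg_iff_add_eq_0 add.commute)
    then show "z \<in> (\<lambda>s. (c2 - c1) * s) ` {s. s ^ q = - s}"
      by (intro image_eqI[of _ _ s]) (simp_all add: algebra_simps)
  next
    fix z assume "z \<in> (\<lambda>s. (c2 - c1) * s) ` {s. s ^ q = - s}"
    then obtain s where s: "s ^ q = - s" and z: "z = (c2 - c1) * s"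
      by blast
    define v where "v = 1 *s u1 + (s / h) *s u2"
    have "v \<noteq> 0"
      unfolding v_def using indep[of 1 "s / h"] by auto
    moreover have "herm q v v = 0" and "herm q v (M *v v) = (c2 - c1) * s"
      using forms[OF v_def, of s] \<open>h \<noteq> 0\<close> s by (simp_all add: algebra_simps eq_diff_eq)
    ultimately show "z \<in> Num0' q M"
      unfolding z by (metis Num0'I)
  qed
qed

theorem proposition3:
  fixes q :: nat and M :: "'a::{finite,field} ^ 2 ^ 2"
    and c1 c2 :: 'a and u1 u2 :: "'a ^ 2"
  assumes "\<exists>p k. prime p \<and> k > 0 \<and> q = p ^ k"
    and "CARD('a) = q ^ 2"
    and "c1 \<noteq> c2"
    and "u1 \<noteq> 0" and "M *v u1 = c1 *s u1"
    and "u2 \<noteq> 0" and "M *v u2 = c2 *s u2"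
    and "herm q u1 u1 = 0" and "herm q u2 u2 = 0"
  shows "\<exists>w. w \<noteq> 0 \<and> Num0' q M = {t * w | t. t \<in> subfield_Fq q}"
proof -
  obtain p k where p: "prime p" and "k > 0" and q: "q = p ^ k"
    using assms(1) by blast
  have "q \<ge> 2"
    using prime_ge_2_nat[OF p] self_le_power[of p k] \<open>k > 0\<close> q by linarith
  have "CARD('a) = p ^ (k * 2)"
    using assms(2) q by (simp only: power_mult)
  then have add: "\<And>x y::'a. (x + y) ^ q = x ^ q + y ^ q"
    unfolding q by (rule power_prime_power_add[OF p])
  have inv: "\<And>x::'a. (x ^ q) ^ q = x"
    using assms(2) by (rule power_power_eq_self_if_CARD_eq_square)
  have indep: "a *s u1 + b *s u2 = 0 \<Longrightarrow> a = 0 \<and> b = 0" for a b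
    by (rule eigenvectors_independent[OF assms(3,4,6,5,7)])
  obtain w :: 'a where w: "w \<noteq> 0" "w ^ q = - w"
    using exists_power_eq_uminus[OF add inv assms(2) \<open>q \<ge> 2\<close>] by blast
  have "Num0' q M = (\<lambda>s. (c2 - c1) * s) ` {s. s ^ q = - s}"
    using \<open>q \<ge> 2\<close>
    by (intro Num0'_eq_trace_kernel[OF add inv _ indep vec2_independent_span[OF indep] assms(5,7-9)])
       simp
  also have "{s. s ^ q = - s} = {t * w | t. t ^ q = t}"
    by (rule power_eq_uminus_eq_multiples[OF w])
  finally have "Num0' q M = {t * ((c2 - c1) * w) | t. t \<in> subfield_Fq q}"
    unfolding subfield_Fq_def by (auto simp: mult.left_commute)
  then show ?thesis
    using w(1) assms(3) by (intro exI[of _ "(c2 - c1) * w"]) simp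
qed

end
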